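(* For any compact metric space $(X,d)$, $$\underline{\dim}(X,d)\le\underline{\mathrm{mo}}(\mathcal K(X),H)\le\overline{\mathrm{mo}}(\mathcal K(X),H)\le\overline{\dim}(X,d).$$
   Context: For a metric space $Y$ with metric $\rho$, $A\subset Y$ nonempty and $\varepsilon>0$, $N(A,\varepsilon)$ is the smallest cardinality of a set $E\subset Y$ with $A\subset\bigcup_{x\in E}B(x,\varepsilon)$. Upper/lower box dimensions: $\overline{\dim}(A)=\limsup_{\varepsilon\to0}\frac{\log N(A,\varepsilon)}{-\log\varepsilon}$, $\underline{\dim}(A)$ with liminf. Upper/lower metric orders: $\overline{\mathrm{mo}}(A)=\limsup_{\varepsilon\to0}\frac{\log\log N(A,\varepsilon)}{-\log\varepsilon}$, $\underline{\mathrm{mo}}(A)$ with liminf. $\mathcal K(X)$ is the space of nonempty closed subsets of $X$ with the Hausdorff metric $H$. *)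

theory Defs
  imports "HOL-Analysis.Analysis"
begin

text \<open>Covering number N(A,eps) in the metric space (Y,rho): the smallest cardinality of
  a (finite) set E of points of Y whose open eps-balls (within Y) cover A.
  (Returns 0 if no finite cover exists; irrelevant for totally bounded sets.)\<close>
definition covnum :: "'a set \<Rightarrow> ('a \<Rightarrow> 'a \<Rightarrow> real) \<Rightarrow> 'a set \<Rightarrow> real \<Rightarrow> nat" where
  "covnum Y \<rho> A \<epsilon> =
     Inf {card E | E. finite E \<and> E \<subseteq> Y \<and> A \<subseteq> (\<Union>x\<in>E. {y\<in>Y. \<rho> x y < \<epsilon>})}"

definition upper_box_dim :: "'a set \<Rightarrow> ('a \<Rightarrow> 'a \<Rightarrow> real) \<Rightarrow> 'a set \<Rightarrow> ereal" where
  "upper_box_dim Y \<rho> A =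
     Limsup (at_right 0) (\<lambda>\<epsilon>. ereal (ln (real (covnum Y \<rho> A \<epsilon>)) / - ln \<epsilon>))"

definition lower_box_dim :: "'a set \<Rightarrow> ('a \<Rightarrow> 'a \<Rightarrow> real) \<Rightarrow> 'a set \<Rightarrow> ereal" where
  "lower_box_dim Y \<rho> A =
     Liminf (at_right 0) (\<lambda>\<epsilon>. ereal (ln (real (covnum Y \<rho> A \<epsilon>)) / - ln \<epsilon>))"

definition upper_metric_order :: "'a set \<Rightarrow> ('a \<Rightarrow> 'a \<Rightarrow> real) \<Rightarrow> 'a set \<Rightarrow> ereal" where
  "upper_metric_order Y \<rho> A =
     Limsup (at_right 0) (\<lambda>\<epsilon>. ereal (ln (ln (real (covnum Y \<rho> A \<epsilon>))) / - ln \<epsilon>))"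

definition lower_metric_order :: "'a set \<Rightarrow> ('a \<Rightarrow> 'a \<Rightarrow> real) \<Rightarrow> 'a set \<Rightarrow> ereal" where
  "lower_metric_order Y \<rho> A =
     Liminf (at_right 0) (\<lambda>\<epsilon>. ereal (ln (ln (real (covnum Y \<rho> A \<epsilon>))) / - ln \<epsilon>))"

definition hausdorff_dist :: "'a::metric_space set \<Rightarrow> 'a set \<Rightarrow> real" where
  "hausdorff_dist A B = max (SUP a\<in>A. infdist a B) (SUP b\<in>B. infdist b A)"

definition closed_subsets :: "'a::metric_space set \<Rightarrow> 'a set set" where
  "closed_subsets X = {A. A \<subseteq> X \<and> A \<noteq> {} \<and> closed A}"

end

theory Submission
  imports Defs
begin

text \<open>Write \<open>N(\<epsilon>)\<close> for the covering number of \<open>X\<close> and \<open>M(\<epsilon>)\<close> for that of \<open>\<K>(X)\<close>.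
  The nonempty subsets of an \<open>\<epsilon>/2\<close>-net of \<open>X\<close> form an \<open>\<epsilon>\<close>-net of \<open>\<K>(X)\<close>, so
  \<open>M(\<epsilon>) \<le> 2^N(\<epsilon>/2)\<close>. Conversely, if \<open>S\<close> is a maximal \<open>2\<epsilon>\<close>-separated subset of \<open>X\<close>, then
  \<open>|S| \<ge> N(2\<epsilon>)\<close> and no Hausdorff \<open>\<epsilon>\<close>-ball contains two distinct nonempty subsets of \<open>S\<close>,
  so \<open>M(\<epsilon>) \<ge> 2^N(2\<epsilon>) - 1\<close>. Hence \<open>log log M(\<epsilon>)\<close> is squeezed between \<open>log N(2\<epsilon>)\<close> and
  \<open>log N(\<epsilon>/2)\<close> up to additive constants, and rescaling \<open>\<epsilon>\<close> by a constant factor does not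
  change the limits of quotients by \<open>-log \<epsilon>\<close>.\<close>

lemma covnum_le:
  assumes "finite E" "E \<subseteq> Y" "A \<subseteq> (\<Union>x\<in>E. {y\<in>Y. \<rho> x y < \<epsilon>})"
  shows "covnum Y \<rho> A \<epsilon> \<le> card E"
  unfolding covnum_def using assms by (intro wellorder_Inf_le1 CollectI exI[of _ E]) simp

lemma covnum_attained:
  assumes "finite E" "E \<subseteq> Y" "A \<subseteq> (\<Union>x\<in>E. {y\<in>Y. \<rho> x y < \<epsilon>})"
  obtains E' where "finite E'" "E' \<subseteq> Y" "A \<subseteq> (\<Union>x\<in>E'. {y\<in>Y. \<rho> x y < \<epsilon>})"
    "card E' = covnum Y \<rho> A \<epsilon>"
proof -
  let ?S = "{card E | E. finite E \<and> E \<subseteq> Y \<and> A \<subseteq> (\<Union>x\<in>E. {y\<in>Y. \<rho> x y < \<epsilon>})}"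
  have "card E \<in> ?S" using assms by (intro CollectI exI[of _ E]) simp
  then have "Inf ?S \<in> ?S" by (intro Inf_nat_def1) blast
  then obtain E' where "card E' = Inf ?S" "finite E'" "E' \<subseteq> Y"
    "A \<subseteq> (\<Union>x\<in>E'. {y\<in>Y. \<rho> x y < \<epsilon>})"
    by (auto simp only: mem_Collect_eq)
  then show ?thesis using that unfolding covnum_def by simp
qed

lemma covnum_pos:
  assumes "finite E" "E \<subseteq> Y" "A \<subseteq> (\<Union>x\<in>E. {y\<in>Y. \<rho> x y < \<epsilon>})" "A \<noteq> {}"
  shows "0 < covnum Y \<rho> A \<epsilon>"
proof -
  obtain E' where E': "finite E'" "E' \<subseteq> Y" "A \<subseteq> (\<Union>x\<in>E'. {y\<in>Y. \<rho> x y < \<epsilon>})"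
    "card E' = covnum Y \<rho> A \<epsilon>"
    by (rule covnum_attained[OF assms(1-3)])
  have "E' \<noteq> {}" using E'(3) assms(4) by blast
  then show ?thesis using E'(1,4) card_gt_0_iff by metis
qed

lemma compact_finite_net:
  fixes X :: "'a::metric_space set"
  assumes "compact X" "\<delta> > 0"
  obtains E where "finite E" "E \<subseteq> X" "X \<subseteq> (\<Union>x\<in>E. {y\<in>X. dist x y < \<delta>})"
proof -
  have "X \<subseteq> (\<Union>x\<in>X. ball x \<delta>)" using assms(2) by auto
  then obtain E where "E \<subseteq> X" "finite E" "X \<subseteq> (\<Union>x\<in>E. ball x \<delta>)"
    using compactE_image[OF assms(1), of X "\<lambda>x. ball x \<delta>"] by auto
  moreover from this(3) have "X \<subseteq> (\<Union>x\<in>E. {y\<in>X. dist x y < \<delta>})" by (auto simp: ball_def)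
  ultimately show ?thesis using that by blast
qed

lemma covnum_compact_pos:
  fixes X :: "'a::metric_space set"
  assumes "compact X" "X \<noteq> {}" "\<epsilon> > 0"
  shows "0 < covnum X dist X \<epsilon>"
proof -
  obtain E where "finite E" "E \<subseteq> X" "X \<subseteq> (\<Union>x\<in>E. {y\<in>X. dist x y < \<epsilon>})"
    using compact_finite_net[OF assms(1,3)] .
  then show ?thesis using covnum_pos[where \<rho> = dist, OF _ _ _ assms(2)] by blast
qed

lemma hausdorff_dist_le:
  fixes A B :: "'a::metric_space set"
  assumes "A \<noteq> {}" "B \<noteq> {}" "\<And>a. a \<in> A \<Longrightarrow> infdist a B \<le> r" "\<And>b. b \<in> B \<Longrightarrow> infdist b A \<le> r"
  shows "hausdorff_dist A B \<le> r"
  unfolding hausdorff_dist_def using assms by (intro max.boundedI cSUP_least) auto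

lemma bdd_above_infdist_image:
  fixes A B :: "'a::metric_space set"
  assumes "bounded A" "B \<noteq> {}"
  shows "bdd_above ((\<lambda>a. infdist a B) ` A)"
proof -
  obtain b where b: "b \<in> B" using assms(2) by blast
  obtain r where r: "\<forall>a\<in>A. dist b a \<le> r" using assms(1) bounded_any_center by metis
  have "infdist a B \<le> r" if "a \<in> A" for a
    using infdist_le[OF b, of a] r that dist_commute[of a b] by fastforce
  then show ?thesis by (rule bdd_aboveI2)
qed

lemma infdist_le_hausdorff_dist_left:
  fixes A B :: "'a::metric_space set"
  assumes "bounded A" "B \<noteq> {}" "a \<in> A"
  shows "infdist a B \<le> hausdorff_dist A B"
proof -
  have "infdist a B \<le> (SUP a\<in>A. infdist a B)"
    using bdd_above_infdist_image[OF assms(1,2)] assms(3) by (rule cSUP_upper[rotated])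
  then show ?thesis unfolding hausdorff_dist_def by (simp add: le_max_iff_disj)
qed

lemma infdist_le_hausdorff_dist_right:
  fixes A B :: "'a::metric_space set"
  assumes "bounded B" "A \<noteq> {}" "b \<in> B"
  shows "infdist b A \<le> hausdorff_dist A B"
proof -
  have "infdist b A \<le> (SUP b\<in>B. infdist b A)"
    using bdd_above_infdist_image[OF assms(1,2)] assms(3) by (rule cSUP_upper[rotated])
  then show ?thesis unfolding hausdorff_dist_def by (simp add: le_max_iff_disj)
qed

lemma infdist_lessE:
  assumes "infdist x A < e" "A \<noteq> {}"
  obtains a where "a \<in> A" "dist x a < e"
proof -
  have "Inf (dist x ` A) < e" using assms by (simp add: infdist_notempty)
  then obtain v where "v \<in> dist x ` A" "v < e" using assms(2) by (meson cInf_lessD image_is_empty)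
  then show ?thesis using that by blast
qed

lemma nonempty_subsets_in_closed_subsets:
  fixes S :: "'a::metric_space set"
  assumes "finite S" "S \<subseteq> X"
  shows "Pow S - {{}} \<subseteq> closed_subsets X"
proof
  fix T assume "T \<in> Pow S - {{}}"
  then have "T \<subseteq> S" "T \<noteq> {}" by auto
  moreover from this(1) have "finite T" using assms(1) by (rule finite_subset)
  ultimately show "T \<in> closed_subsets X"
    using assms(2) unfolding closed_subsets_def by (simp add: finite_imp_closed)
qed

lemma bounded_closed_subsets:
  fixes X :: "'a::metric_space set"
  assumes "compact X" "A \<in> closed_subsets X"
  shows "bounded A"
  using assms compact_imp_bounded bounded_subset unfolding closed_subsets_def by auto

section \<open>Upper bound on the covering numbers of the hyperspace\<close>

lemma hausdorff_dist_net_trace_le: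
  fixes X :: "'a::metric_space set"
  assumes E: "X \<subseteq> (\<Union>x\<in>E. {y\<in>X. dist x y < \<delta>})" and A: "A \<subseteq> X" "A \<noteq> {}"
  defines "T \<equiv> {x\<in>E. \<exists>a\<in>A. dist x a < \<delta>}"
  shows "T \<noteq> {}" and "hausdorff_dist T A \<le> \<delta>"
proof -
  have near: "\<exists>x\<in>T. dist x b < \<delta>" if "b \<in> A" for b
    using that A E unfolding T_def by blast
  then show "T \<noteq> {}" using A(2) by blast
  then show "hausdorff_dist T A \<le> \<delta>"
  proof (rule hausdorff_dist_le[OF _ A(2)])
    show "infdist t A \<le> \<delta>" if "t \<in> T" for t
      using that unfolding T_def by (auto intro: infdist_le2)
    show "infdist b T \<le> \<delta>" if "b \<in> A" for b
      using near[OF that] by (auto intro: infdist_le2 simp: dist_commute)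
  qed
qed

lemma closed_subsets_finite_net:
  fixes X :: "'a::metric_space set"
  assumes "compact X" "\<epsilon> > 0"
  obtains C where "finite C" "C \<subseteq> closed_subsets X"
    "closed_subsets X \<subseteq> (\<Union>T\<in>C. {A\<in>closed_subsets X. hausdorff_dist T A < \<epsilon>})"
    "card C \<le> 2 ^ covnum X dist X (\<epsilon>/2)"
proof -
  obtain E0 where "finite E0" "E0 \<subseteq> X" "X \<subseteq> (\<Union>x\<in>E0. {y\<in>X. dist x y < \<epsilon>/2})"
    using compact_finite_net[OF assms(1) half_gt_zero[OF assms(2)]] .
  then obtain E where E: "finite E" "E \<subseteq> X" "X \<subseteq> (\<Union>x\<in>E. {y\<in>X. dist x y < \<epsilon>/2})"
    "card E = covnum X dist X (\<epsilon>/2)"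
    by (rule covnum_attained)
  define C where "C = Pow E - {{}}"
  have "finite C" using E(1) unfolding C_def by simp
  moreover have "C \<subseteq> closed_subsets X"
    unfolding C_def using E(1,2) by (rule nonempty_subsets_in_closed_subsets)
  moreover have "closed_subsets X \<subseteq> (\<Union>T\<in>C. {A\<in>closed_subsets X. hausdorff_dist T A < \<epsilon>})"
  proof
    fix A assume A: "A \<in> closed_subsets X"
    define T where "T = {x\<in>E. \<exists>a\<in>A. dist x a < \<epsilon>/2}"
    have "A \<subseteq> X" "A \<noteq> {}" using A unfolding closed_subsets_def by auto
    note trace = hausdorff_dist_net_trace_le[OF E(3) this, folded T_def]
    have "T \<subseteq> E" unfolding T_def by blast
    then have "T \<in> C" using trace(1) unfolding C_def by blast
    moreover have "hausdorff_dist T A < \<epsilon>" using trace(2) assms(2) by linarith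
    ultimately show "A \<in> (\<Union>T\<in>C. {A\<in>closed_subsets X. hausdorff_dist T A < \<epsilon>})" using A by blast
  qed
  moreover have "card C \<le> 2 ^ covnum X dist X (\<epsilon>/2)"
  proof -
    have "card C \<le> card (Pow E)" using E(1) unfolding C_def by (intro card_mono) auto
    then show ?thesis using E(1,4) by (simp add: card_Pow)
  qed
  ultimately show ?thesis using that by blast
qed

lemma covnum_closed_subsets_le:
  fixes X :: "'a::metric_space set"
  assumes "compact X" "\<epsilon> > 0"
  shows "covnum (closed_subsets X) hausdorff_dist (closed_subsets X) \<epsilon> \<le> 2 ^ covnum X dist X (\<epsilon>/2)"
proof -
  obtain C where C: "finite C" "C \<subseteq> closed_subsets X"
    "closed_subsets X \<subseteq> (\<Union>T\<in>C. {A\<in>closed_subsets X. hausdorff_dist T A < \<epsilon>})"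
    "card C \<le> 2 ^ covnum X dist X (\<epsilon>/2)"
    using closed_subsets_finite_net[OF assms] .
  show ?thesis using covnum_le[OF C(1-3)] C(4) by (rule le_trans)
qed

lemma covnum_closed_subsets_pos:
  fixes X :: "'a::metric_space set"
  assumes "compact X" "X \<noteq> {}" "\<epsilon> > 0"
  shows "0 < covnum (closed_subsets X) hausdorff_dist (closed_subsets X) \<epsilon>"
proof -
  obtain C where C: "finite C" "C \<subseteq> closed_subsets X"
    "closed_subsets X \<subseteq> (\<Union>T\<in>C. {A\<in>closed_subsets X. hausdorff_dist T A < \<epsilon>})"
    "card C \<le> 2 ^ covnum X dist X (\<epsilon>/2)"
    using closed_subsets_finite_net[OF assms(1,3)] .
  have "X \<in> closed_subsets X"
    using assms(1,2) unfolding closed_subsets_def by (simp add: compact_imp_closed)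
  then have "closed_subsets X \<noteq> {}" by auto
  then show ?thesis by (rule covnum_pos[OF C(1-3)])
qed

section \<open>Lower bound on the covering numbers of the hyperspace\<close>

definition separated :: "real \<Rightarrow> 'a::metric_space set \<Rightarrow> bool" where
  "separated d S \<longleftrightarrow> (\<forall>s\<in>S. \<forall>t\<in>S. s \<noteq> t \<longrightarrow> d \<le> dist s t)"

lemma separated_card_le:
  fixes X :: "'a::metric_space set"
  assumes "finite E" "X \<subseteq> (\<Union>x\<in>E. {y\<in>X. dist x y < \<delta>/2})" "S \<subseteq> X" "separated \<delta> S"
  shows "card S \<le> card E"
proof -
  have "\<forall>s\<in>S. \<exists>x\<in>E. dist x s < \<delta>/2" using assms(2,3) by blast
  then obtain f where f: "\<And>s. s \<in> S \<Longrightarrow> f s \<in> E \<and> dist (f s) s < \<delta>/2" by metis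
  have "inj_on f S"
  proof (rule inj_onI)
    fix s t assume st: "s \<in> S" "t \<in> S" "f s = f t"
    have "dist s t \<le> dist (f s) s + dist (f s) t" by (rule dist_triangle3)
    also have "\<dots> < \<delta>" using f[OF st(1)] f[OF st(2)] st(3) by simp
    finally show "s = t" using assms(4) st(1,2) unfolding separated_def by force
  qed
  moreover have "f ` S \<subseteq> E" using f by blast
  ultimately show ?thesis using assms(1) by (rule card_inj_on_le)
qed

text \<open>Compactness bounds the cardinalities of separated sets, and a separated set of
  maximal cardinality is a net.\<close>

lemma compact_maximal_separated_net:
  fixes X :: "'a::metric_space set"
  assumes "compact X" "\<delta> > 0"
  obtains S where "finite S" "S \<subseteq> X" "separated \<delta> S" "X \<subseteq> (\<Union>s\<in>S. {y\<in>X. dist s y < \<delta>})"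
proof -
  obtain E where E: "finite E" "E \<subseteq> X" "X \<subseteq> (\<Union>x\<in>E. {y\<in>X. dist x y < \<delta>/2})"
    using compact_finite_net[OF assms(1) half_gt_zero[OF assms(2)]] .
  define Cs where "Cs = {card S | S. finite S \<and> S \<subseteq> X \<and> separated \<delta> S}"
  have "Cs \<subseteq> {..card E}" unfolding Cs_def using separated_card_le[OF E(1,3)] by auto
  then have "finite Cs" by (rule finite_subset) simp
  moreover have "card {} \<in> Cs" unfolding Cs_def separated_def by (intro CollectI exI[of _ "{}"]) simp
  ultimately have "Max Cs \<in> Cs" by (intro Max_in) auto
  then obtain S where S: "finite S" "S \<subseteq> X" "separated \<delta> S" "card S = Max Cs"
    unfolding Cs_def by (auto simp only: mem_Collect_eq)
  have "X \<subseteq> (\<Union>s\<in>S. {y\<in>X. dist s y < \<delta>})"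
  proof (rule ccontr)
    assume "\<not> X \<subseteq> (\<Union>s\<in>S. {y\<in>X. dist s y < \<delta>})"
    then obtain y where "y \<in> X" "y \<notin> (\<Union>s\<in>S. {y\<in>X. dist s y < \<delta>})" by blast
    then have y: "y \<in> X" "\<And>s. s \<in> S \<Longrightarrow> \<delta> \<le> dist s y" by (auto simp: not_less)
    have "y \<notin> S" using y(2)[of y] assms(2) by auto
    have "separated \<delta> (insert y S)"
      using S(3) y(2) unfolding separated_def by (auto simp: dist_commute)
    then have "card (insert y S) \<in> Cs" unfolding Cs_def using S(1,2) y(1)
      by (intro CollectI exI[of _ "insert y S"]) simp
    then have "card (insert y S) \<le> Max Cs" using \<open>finite Cs\<close> by (intro Max_ge)
    then show False using S(1,4) \<open>y \<notin> S\<close> by simp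
  qed
  with S(1-3) show ?thesis by (rule that)
qed

lemma separated_subsets_eq_if_hausdorff_dist_less:
  fixes c S :: "'a::metric_space set"
  assumes sep: "separated (2*\<epsilon>) S" and "finite S" and c: "bounded c" "c \<noteq> {}"
    and "T1 \<subseteq> S" "T2 \<subseteq> S" "T1 \<noteq> {}" "T2 \<noteq> {}"
    and "hausdorff_dist c T1 < \<epsilon>" "hausdorff_dist c T2 < \<epsilon>"
  shows "T1 = T2"
proof -
  have sub: "U \<subseteq> V"
    if U: "U \<subseteq> S" "hausdorff_dist c U < \<epsilon>" and V: "V \<subseteq> S" "V \<noteq> {}" "hausdorff_dist c V < \<epsilon>"
    for U V
  proof
    fix s assume "s \<in> U"
    have "finite U" using U(1) \<open>finite S\<close> by (rule finite_subset)
    then have "infdist s c < \<epsilon>"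
      using infdist_le_hausdorff_dist_right[OF finite_imp_bounded c(2) \<open>s \<in> U\<close>] U(2)
      by linarith
    then obtain z where z: "z \<in> c" "dist s z < \<epsilon>" using c(2) by (rule infdist_lessE)
    have "infdist z V < \<epsilon>"
      using infdist_le_hausdorff_dist_left[OF c(1) V(2) z(1)] V(3) by linarith
    then obtain t where t: "t \<in> V" "dist z t < \<epsilon>" using V(2) by (rule infdist_lessE)
    have "dist s t < 2*\<epsilon>" using dist_triangle[of s t z] z t by linarith
    then show "s \<in> V" using sep \<open>s \<in> U\<close> t U(1) V(1) unfolding separated_def by force
  qed
  show ?thesis
    using sub[OF assms(5,9,6,8,10)] sub[OF assms(6,10,5,7,9)] by (rule equalityI)
qed

lemma covnum_closed_subsets_ge:
  fixes X :: "'a::metric_space set"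
  assumes X: "compact X" and "\<epsilon> > 0"
  shows "2 ^ covnum X dist X (2*\<epsilon>) \<le> covnum (closed_subsets X) hausdorff_dist (closed_subsets X) \<epsilon> + 1"
proof -
  have "2*\<epsilon> > 0" using \<open>\<epsilon> > 0\<close> by simp
  then obtain S where S: "finite S" "S \<subseteq> X" "separated (2*\<epsilon>) S"
    "X \<subseteq> (\<Union>s\<in>S. {y\<in>X. dist s y < 2*\<epsilon>})"
    by (rule compact_maximal_separated_net[OF X])
  obtain C where C: "finite C" "C \<subseteq> closed_subsets X"
    "closed_subsets X \<subseteq> (\<Union>T\<in>C. {A\<in>closed_subsets X. hausdorff_dist T A < \<epsilon>})"
    "card C \<le> 2 ^ covnum X dist X (\<epsilon>/2)"
    using closed_subsets_finite_net[OF X \<open>\<epsilon> > 0\<close>] .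
  obtain E where E: "finite E" "E \<subseteq> closed_subsets X"
    "closed_subsets X \<subseteq> (\<Union>T\<in>E. {A\<in>closed_subsets X. hausdorff_dist T A < \<epsilon>})"
    "card E = covnum (closed_subsets X) hausdorff_dist (closed_subsets X) \<epsilon>"
    using covnum_attained[OF C(1-3)] .
  define Fam where "Fam = Pow S - {{}}"
  have "Fam \<subseteq> closed_subsets X" unfolding Fam_def using S(1,2) by (rule nonempty_subsets_in_closed_subsets)
  then have "\<forall>T\<in>Fam. \<exists>c\<in>E. hausdorff_dist c T < \<epsilon>" using E(3) by blast
  then obtain g where g: "\<And>T. T \<in> Fam \<Longrightarrow> g T \<in> E \<and> hausdorff_dist (g T) T < \<epsilon>" by metis
  have "inj_on g Fam"
  proof (rule inj_onI)
    fix T1 T2 assume T: "T1 \<in> Fam" "T2 \<in> Fam" "g T1 = g T2"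
    have "g T1 \<in> closed_subsets X" using g[OF T(1)] E(2) by blast
    then have "bounded (g T1)" "g T1 \<noteq> {}"
      using bounded_closed_subsets[OF X] unfolding closed_subsets_def by auto
    moreover have "T1 \<subseteq> S" "T2 \<subseteq> S" "T1 \<noteq> {}" "T2 \<noteq> {}" using T(1,2) unfolding Fam_def by auto
    moreover have "hausdorff_dist (g T1) T1 < \<epsilon>" "hausdorff_dist (g T1) T2 < \<epsilon>"
      using g[OF T(1)] g[OF T(2)] T(3) by auto
    ultimately show "T1 = T2" by (rule separated_subsets_eq_if_hausdorff_dist_less[OF S(3,1)])
  qed
  moreover have "g ` Fam \<subseteq> E" using g by blast
  ultimately have "card Fam \<le> card E" using E(1) by (intro card_inj_on_le)
  then have "2 ^ card S \<le> covnum (closed_subsets X) hausdorff_dist (closed_subsets X) \<epsilon> + 1"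
    using S(1) E(4) unfolding Fam_def by (simp add: card_Diff_singleton card_Pow)
  moreover have "(2::nat) ^ covnum X dist X (2*\<epsilon>) \<le> 2 ^ card S"
    using covnum_le[OF S(1,2,4)] by (rule power_increasing) simp
  ultimately show ?thesis by linarith
qed

lemma ln_ln_le_ln_of_le_power2:
  fixes n m :: nat
  assumes "1 \<le> n" "1 \<le> m" "m \<le> 2 ^ n"
  shows "ln (ln (real m)) \<le> ln (real n)"
proof (cases "m = 1")
  case True
  \<comment> \<open>\<open>ln (ln 1) = ln 0 = 0\<close> by the junk value of \<open>ln\<close> at \<open>0\<close>\<close>
  then show ?thesis using assms(1) by simp
next
  case False
  then have m2: "2 \<le> real m" using assms(2) by simp
  have "real m \<le> 2 ^ n" using assms(3) by (metis of_nat_le_iff of_nat_numeral of_nat_power)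
  then have "ln (real m) \<le> ln (2 ^ n)" using m2 by (subst ln_le_cancel_iff) auto
  also have "\<dots> = real n * ln 2" by (simp add: ln_realpow)
  also have "\<dots> \<le> real n" using ln_2_less_1 by (simp add: mult_left_le)
  finally show ?thesis using m2 assms(1) by (subst ln_le_cancel_iff) auto
qed

lemma ln_ln_ge_ln_of_power2_le:
  fixes n m :: nat
  assumes "1 \<le> n" "2 ^ n \<le> m + 1"
  shows "ln (real n) + ln (ln 2 / 2) \<le> ln (ln (real m))"
proof -
  have ln2: "0 < ln (2::real)" "ln (2::real) < 1" using ln_2_less_1 by auto
  show ?thesis
  proof (cases "n = 1")
    case True
    then have "1 \<le> m" using assms(2) by simp
    show ?thesis
    proof (cases "m = 1")
      case True
      \<comment> \<open>again \<open>ln (ln 1) = 0\<close>\<close>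
      then show ?thesis using \<open>n = 1\<close> ln2 by simp
    next
      case False
      then have m2: "2 \<le> real m" using \<open>1 \<le> m\<close> by simp
      have "ln (ln 2 / 2) \<le> ln (ln (2::real))" using ln2 by (subst ln_le_cancel_iff) auto
      also have "\<dots> \<le> ln (ln (real m))" using m2 ln2 by (subst ln_le_cancel_iff) auto
      finally show ?thesis using \<open>n = 1\<close> by simp
    qed
  next
    case False
    then have n2: "2 \<le> n" using assms(1) by simp
    have "(2::nat) ^ n = 2 * 2 ^ (n - 1)" using n2 by (simp flip: power_Suc)
    then have "2 ^ (n - 1) \<le> m" using assms(2) one_le_power[of 2 "n - 1"] by linarith
    then have mr: "(2::real) ^ (n - 1) \<le> real m" by (metis numeral_power_le_of_nat_cancel_iff)
    have "0 < real m" using mr by (rule less_le_trans[rotated]) simp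
    have "real n * (ln 2 / 2) \<le> real (n - 1) * ln 2" using n2 ln2 by (simp add: of_nat_diff field_simps)
    also have "\<dots> = ln (2 ^ (n - 1))" by (simp add: ln_realpow)
    also have "\<dots> \<le> ln (real m)" using mr \<open>0 < real m\<close> by (subst ln_le_cancel_iff) auto
    finally have "real n * (ln 2 / 2) \<le> ln (real m)" .
    moreover have "0 < real n * (ln 2 / 2)" using n2 ln2 by simp
    ultimately have "ln (real n * (ln 2 / 2)) \<le> ln (ln (real m))" by (subst ln_le_cancel_iff) auto
    moreover have "ln (real n * (ln 2 / 2)) = ln (real n) + ln (ln 2 / 2)"
      using n2 ln2 by (intro ln_mult_pos) auto
    ultimately show ?thesis by simp
  qed
qed

section \<open>Limits at \<open>0\<close> under rescaling\<close>

lemma eventually_at_right_0_rescale: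
  fixes c :: real
  assumes "0 < c" "eventually P (at_right 0)"
  shows "eventually (\<lambda>e. P (c * e)) (at_right 0)"
proof -
  obtain d where "0 < d" "\<And>e. 0 < e \<Longrightarrow> e < d \<Longrightarrow> P e"
    using assms(2) unfolding eventually_at_right_field by auto
  then show ?thesis
    unfolding eventually_at_right_field using assms(1)
    by (intro exI[of _ "d / c"]) (auto simp: field_simps)
qed

lemma tendsto_divide_ln_at_right_0: "((\<lambda>e::real. a / ln e) \<longlongrightarrow> 0) (at_right 0)"
  using tendsto_const filterlim_mono[OF ln_at_0 at_bot_le_at_infinity order_refl]
  by (rule tendsto_divide_0)

lemma tendsto_ln_ratio_at_right_0:
  fixes c :: real
  assumes "0 < c"
  shows "((\<lambda>e. ln (c * e) / ln e) \<longlongrightarrow> 1) (at_right 0)"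
proof -
  have "((\<lambda>e. 1 + ln c / ln e) \<longlongrightarrow> 1 + 0) (at_right 0)"
    by (intro tendsto_add tendsto_const tendsto_divide_ln_at_right_0)
  moreover have "\<forall>\<^sub>F e in at_right 0. 1 + ln c / ln e = ln (c * e) / ln e"
    unfolding eventually_at_right_field
  proof (intro exI[of _ 1] conjI allI impI)
    fix e :: real assume "0 < e" "e < 1"
    then have "ln e \<noteq> 0" by simp
    then show "1 + ln c / ln e = ln (c * e) / ln e"
      using assms \<open>0 < e\<close> by (simp add: ln_mult field_simps)
  qed simp
  ultimately show ?thesis using tendsto_cong by fastforce
qed

lemma Limsup_at_right_0_le_rescaled:
  fixes F G \<rho> \<sigma> :: "real \<Rightarrow> real"
  assumes "0 < c" and bound: "\<forall>\<^sub>F e in at_right 0. F e \<le> G (c * e) * \<rho> e + \<sigma> e"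
    and \<rho>: "(\<rho> \<longlongrightarrow> 1) (at_right 0)" and \<sigma>: "(\<sigma> \<longlongrightarrow> 0) (at_right 0)"
  shows "Limsup (at_right 0) (\<lambda>e. ereal (F e)) \<le> Limsup (at_right 0) (\<lambda>e. ereal (G e))"
proof (rule dense_ge)
  fix z assume z: "Limsup (at_right 0) (\<lambda>e. ereal (G e)) < z"
  show "Limsup (at_right 0) (\<lambda>e. ereal (F e)) \<le> z"
  proof (cases z)
    case (real y)
    have "\<forall>\<^sub>F e in at_right 0. G e < y" using Limsup_lessD[OF z] by (simp add: real)
    then have "\<forall>\<^sub>F e in at_right 0. G (c * e) < y" by (rule eventually_at_right_0_rescale[OF \<open>0 < c\<close>])
    moreover have "\<forall>\<^sub>F e in at_right 0. 0 < \<rho> e" using \<rho> by (rule order_tendstoD) simp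
    ultimately have "\<forall>\<^sub>F e in at_right 0. ereal (F e) \<le> ereal (y * \<rho> e + \<sigma> e)"
      using bound
    proof eventually_elim
      case (elim e)
      have "G (c * e) * \<rho> e \<le> y * \<rho> e" using elim(1,2) by (intro mult_right_mono) auto
      then show ?case using elim(3) by simp
    qed
    then have "Limsup (at_right 0) (\<lambda>e. ereal (F e)) \<le> Limsup (at_right 0) (\<lambda>e. ereal (y * \<rho> e + \<sigma> e))"
      by (rule Limsup_mono)
    also have "\<dots> = ereal (y * 1 + 0)"
    proof (rule lim_imp_Limsup[OF trivial_limit_at_right_real])
      show "((\<lambda>e. ereal (y * \<rho> e + \<sigma> e)) \<longlongrightarrow> ereal (y * 1 + 0)) (at_right 0)"
        unfolding lim_ereal using \<rho> \<sigma> by (intro tendsto_add tendsto_mult tendsto_const)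
    qed
    finally show ?thesis by (simp add: real)
  qed (use z in simp_all)
qed

lemma Liminf_at_right_0_ge_rescaled:
  fixes F G \<rho> \<sigma> :: "real \<Rightarrow> real"
  assumes "0 < c" and bound: "\<forall>\<^sub>F e in at_right 0. G (c * e) * \<rho> e + \<sigma> e \<le> F e"
    and \<rho>: "(\<rho> \<longlongrightarrow> 1) (at_right 0)" and \<sigma>: "(\<sigma> \<longlongrightarrow> 0) (at_right 0)"
  shows "Liminf (at_right 0) (\<lambda>e. ereal (G e)) \<le> Liminf (at_right 0) (\<lambda>e. ereal (F e))"
proof (rule dense_le)
  fix z assume z: "z < Liminf (at_right 0) (\<lambda>e. ereal (G e))"
  show "z \<le> Liminf (at_right 0) (\<lambda>e. ereal (F e))"
  proof (cases z)
    case (real y)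
    have "\<forall>\<^sub>F e in at_right 0. y < G e" using less_LiminfD[OF z] by (simp add: real)
    then have "\<forall>\<^sub>F e in at_right 0. y < G (c * e)" by (rule eventually_at_right_0_rescale[OF \<open>0 < c\<close>])
    moreover have "\<forall>\<^sub>F e in at_right 0. 0 < \<rho> e" using \<rho> by (rule order_tendstoD) simp
    ultimately have "\<forall>\<^sub>F e in at_right 0. ereal (y * \<rho> e + \<sigma> e) \<le> ereal (F e)"
      using bound
    proof eventually_elim
      case (elim e)
      have "y * \<rho> e \<le> G (c * e) * \<rho> e" using elim(1,2) by (intro mult_right_mono) auto
      then show ?case using elim(3) by simp
    qed
    then have "Liminf (at_right 0) (\<lambda>e. ereal (y * \<rho> e + \<sigma> e)) \<le> Liminf (at_right 0) (\<lambda>e. ereal (F e))"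
      by (rule Liminf_mono)
    moreover have "Liminf (at_right 0) (\<lambda>e. ereal (y * \<rho> e + \<sigma> e)) = ereal (y * 1 + 0)"
    proof (rule lim_imp_Liminf[OF trivial_limit_at_right_real])
      show "((\<lambda>e. ereal (y * \<rho> e + \<sigma> e)) \<longlongrightarrow> ereal (y * 1 + 0)) (at_right 0)"
        unfolding lim_ereal using \<rho> \<sigma> by (intro tendsto_add tendsto_mult tendsto_const)
    qed
    ultimately show ?thesis by (simp add: real)
  qed (use z in simp_all)
qed

lemma upper_metric_order_closed_subsets_le:
  fixes X :: "'a::metric_space set"
  assumes "compact X" "X \<noteq> {}"
  shows "upper_metric_order (closed_subsets X) hausdorff_dist (closed_subsets X) \<le> upper_box_dim X dist X"
proof -
  let ?N = "\<lambda>e. real (covnum X dist X e)"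
  let ?M = "\<lambda>e. real (covnum (closed_subsets X) hausdorff_dist (closed_subsets X) e)"
  have "\<forall>\<^sub>F e in at_right 0.
      ln (ln (?M e)) / - ln e \<le> ln (?N (1/2 * e)) / - ln (1/2 * e) * (ln (1/2 * e) / ln e) + 0"
    unfolding eventually_at_right_field
  proof (intro exI[of _ "1/2"] conjI allI impI)
    fix e :: real assume e: "0 < e" "e < 1/2"
    have "ln (ln (?M e)) \<le> ln (?N (e/2))"
      using covnum_closed_subsets_pos[OF assms e(1)] covnum_compact_pos[OF assms, of "e/2"]
        covnum_closed_subsets_le[OF assms(1) e(1)] e(1)
      by (intro ln_ln_le_ln_of_le_power2) auto
    then have "ln (ln (?M e)) / - ln e \<le> ln (?N (e/2)) / - ln e"
      using e by (intro divide_right_mono) auto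
    also have "\<dots> = ln (?N (1/2 * e)) / - ln (1/2 * e) * (ln (1/2 * e) / ln e) + 0"
      using e by (simp add: field_simps)
    finally show "ln (ln (?M e)) / - ln e
        \<le> ln (?N (1/2 * e)) / - ln (1/2 * e) * (ln (1/2 * e) / ln e) + 0" .
  qed simp
  from Limsup_at_right_0_le_rescaled[where G = "\<lambda>e. ln (?N e) / - ln e", OF _ this
      tendsto_ln_ratio_at_right_0 tendsto_const]
  show ?thesis unfolding upper_metric_order_def upper_box_dim_def by simp
qed

lemma lower_box_dim_le_lower_metric_order_closed_subsets:
  fixes X :: "'a::metric_space set"
  assumes "compact X" "X \<noteq> {}"
  shows "lower_box_dim X dist X \<le> lower_metric_order (closed_subsets X) hausdorff_dist (closed_subsets X)"
proof -
  let ?N = "\<lambda>e. real (covnum X dist X e)"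
  let ?M = "\<lambda>e. real (covnum (closed_subsets X) hausdorff_dist (closed_subsets X) e)"
  let ?c = "ln (ln 2 / 2) :: real"
  have "\<forall>\<^sub>F e in at_right 0.
      ln (?N (2 * e)) / - ln (2 * e) * (ln (2 * e) / ln e) + - ?c / ln e \<le> ln (ln (?M e)) / - ln e"
    unfolding eventually_at_right_field
  proof (intro exI[of _ "1/4"] conjI allI impI)
    fix e :: real assume e: "0 < e" "e < 1/4"
    have "ln (?N (2 * e)) + ?c \<le> ln (ln (?M e))"
      using covnum_compact_pos[OF assms, of "2 * e"] covnum_closed_subsets_ge[OF assms(1) e(1)] e(1)
      by (intro ln_ln_ge_ln_of_power2_le) auto
    then have "(ln (?N (2 * e)) + ?c) / - ln e \<le> ln (ln (?M e)) / - ln e"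
      using e by (intro divide_right_mono) auto
    moreover have "(ln (?N (2 * e)) + ?c) / - ln e
        = ln (?N (2 * e)) / - ln (2 * e) * (ln (2 * e) / ln e) + - ?c / ln e"
      using e by (simp add: field_simps)
    ultimately show "ln (?N (2 * e)) / - ln (2 * e) * (ln (2 * e) / ln e) + - ?c / ln e
        \<le> ln (ln (?M e)) / - ln e"
      by simp
  qed simp
  from Liminf_at_right_0_ge_rescaled[where G = "\<lambda>e. ln (?N e) / - ln e", OF _ this
      tendsto_ln_ratio_at_right_0 tendsto_divide_ln_at_right_0]
  show ?thesis unfolding lower_metric_order_def lower_box_dim_def by simp
qed

theorem proposition4p5:
  fixes X :: "'a::metric_space set"
  assumes "compact X" and "X \<noteq> {}"
  shows "lower_box_dim X dist X
           \<le> lower_metric_order (closed_subsets X) hausdorff_dist (closed_subsets X)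
       \<and> lower_metric_order (closed_subsets X) hausdorff_dist (closed_subsets X)
           \<le> upper_metric_order (closed_subsets X) hausdorff_dist (closed_subsets X)
       \<and> upper_metric_order (closed_subsets X) hausdorff_dist (closed_subsets X)
           \<le> upper_box_dim X dist X"
proof (intro conjI)
  show "lower_metric_order (closed_subsets X) hausdorff_dist (closed_subsets X)
      \<le> upper_metric_order (closed_subsets X) hausdorff_dist (closed_subsets X)"
    unfolding lower_metric_order_def upper_metric_order_def
    by (rule Liminf_le_Limsup[OF trivial_limit_at_right_real])
qed (use assms lower_box_dim_le_lower_metric_order_closed_subsets
      upper_metric_order_closed_subsets_le in blast)+

end
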